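(* Let $D\subset\mathbb{R}^2$ be a domain, $v\colon D\to\mathbb{R}^2$ a diffeomorphism onto its image, and let $A\colon[0,\infty)\to\mathbb{SL}(2)$ be a geodesic of $\mathbb{SL}(2)$, where $\mathbb{SL}(2)\subset\mathbb{R}^{2\times2}\cong\mathbb{R}^4$ carries the Riemannian metric induced by the Euclidean metric of $\mathbb{R}^4$. Then $\varphi(t,\alpha)=A(t)v(\alpha)$ is a solution of the Lagrangian incompressible Euler problem on $D$.
   Context: $\mathbb{SL}(2)$ is the group of real $2\times2$ matrices of determinant $1$, a $3$-dimensional submanifold of $\mathbb{R}^{2\times 2}\cong\mathbb{R}^4$. For $\varphi(t,\alpha)=\varphi^t(\alpha)$, primes denote $t$-derivatives and $d\varphi^t$ the Jacobian in $\alpha$. "Solution of the Lagrangian incompressible Euler problem on $D$" means: each $\varphi^t$ is a diffeomorphism of $D$ onto its image, $\det(d\varphi^t)=\det(d\varphi^0)\ne0$ for all $t\ge0$, and there is a scalar function $p(t,\alpha)$ with $(d\varphi^t)^T\varphi''+\nabla_\alpha p=0$. *)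

theory Defs
  imports "HOL-Analysis.Analysis"
begin

text \<open>Real 2x2 matrices are modelled as real^2^2; the library inner product on this
type is the Frobenius (Euclidean R^4) inner product.\<close>

definition SL2 :: "(real^2^2) set" where
  "SL2 = {M. det M = 1}"

definition tangent_space :: "'a::real_normed_vector set \<Rightarrow> 'a \<Rightarrow> 'a set" where
  "tangent_space M p = {X. \<exists>\<gamma> e. e > 0 \<and> \<gamma> 0 = p \<and> (\<forall>s. \<bar>s\<bar> < e \<longrightarrow> \<gamma> s \<in> M)
                              \<and> (\<gamma> has_vector_derivative X) (at 0)}"

definition geodesic_SL2 :: "(real \<Rightarrow> real^2^2) \<Rightarrow> bool" where
  "geodesic_SL2 A \<longleftrightarrow> (\<exists>A1 A2. \<forall>t\<ge>0.
      A t \<in> SL2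
    \<and> (A has_vector_derivative A1 t) (at t within {0..})
    \<and> (A1 has_vector_derivative A2 t) (at t within {0..})
    \<and> (\<forall>X\<in>tangent_space SL2 (A t). A2 t \<bullet> X = 0))"

definition diffeo_onto_image :: "(real^2 \<Rightarrow> real^2) \<Rightarrow> (real^2) set \<Rightarrow> bool" where
  "diffeo_onto_image f D \<longleftrightarrow> inj_on f D \<and> open (f ` D)
    \<and> (\<forall>x\<in>D. f differentiable (at x)) \<and> continuous_on D (\<lambda>x. jacobian f (at x))
    \<and> (\<exists>g. (\<forall>x\<in>D. g (f x) = x)
         \<and> (\<forall>y\<in>f ` D. g differentiable (at y)) \<and> continuous_on (f ` D) (\<lambda>y. jacobian g (at y)))"

definition lagrangian_euler_solution ::
    "(real^2) set \<Rightarrow> (real \<Rightarrow> real^2 \<Rightarrow> real^2) \<Rightarrow> bool" where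
  "lagrangian_euler_solution D \<phi> \<longleftrightarrow>
     (\<forall>t\<ge>0. diffeo_onto_image (\<phi> t) D)
   \<and> (\<forall>t\<ge>0. \<forall>\<alpha>\<in>D. det (jacobian (\<phi> t) (at \<alpha>)) = det (jacobian (\<phi> 0) (at \<alpha>)))
   \<and> (\<forall>\<alpha>\<in>D. det (jacobian (\<phi> 0) (at \<alpha>)) \<noteq> 0)
   \<and> (\<exists>\<phi>1 \<phi>2 (p :: real \<Rightarrow> real^2 \<Rightarrow> real). \<forall>t\<ge>0. \<forall>\<alpha>\<in>D.
        ((\<lambda>s. \<phi> s \<alpha>) has_vector_derivative \<phi>1 t \<alpha>) (at t within {0..})
      \<and> ((\<lambda>s. \<phi>1 s \<alpha>) has_vector_derivative \<phi>2 t \<alpha>) (at t within {0..})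
      \<and> (\<exists>g. (p t has_derivative (\<lambda>h. g \<bullet> h)) (at \<alpha>)
             \<and> transpose (jacobian (\<phi> t) (at \<alpha>)) *v \<phi>2 t \<alpha> + g = 0))"

end

theory Submission imports Defs begin

text \<open>Since \<open>det A(t) = 1\<close>, the Jacobian \<open>A(t) dv\<close> of the flow has constant determinant and
the flow stays a diffeomorphism. The tangent space of \<open>SL(2)\<close> at \<open>M\<close> contains \<open>M B\<close> for every
nilpotent \<open>B\<close>, and the nilpotents span \<open>sl(2)\<close>; so the geodesic equation says that \<open>A(t)\<^sup>T A''(t)\<close> is
orthogonal to all trace-free matrices, i.e. \<open>A(t)\<^sup>T A''(t) = c(t) I\<close>. Hence
\<open>(d\<phi>\<^sup>t)\<^sup>T \<phi>'' = dv\<^sup>T A\<^sup>T A'' v = c(t) dv\<^sup>T v\<close>, the gradient of \<open>c(t) |v|\<^sup>2 / 2\<close>, and the pressure is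
\<open>p = - c(t) |v|\<^sup>2 / 2\<close>.\<close>

lemma bounded_linear_matrix_mult_left: "bounded_linear (\<lambda>X::real^'n^'m. M ** X)"
  by (rule linear_conv_bounded_linear[THEN iffD1], rule linearI)
     (simp_all add: matrix_add_ldistrib matrix_scalar_ac scalar_matrix_assoc[symmetric])

lemma bounded_linear_matrix_mult_right: "bounded_linear (\<lambda>X::real^'n^'m. X ** M)"
  by (rule linear_conv_bounded_linear[THEN iffD1], rule linearI)
     (simp_all add: matrix_matrix_mult_def vec_eq_iff sum.distrib distrib_left
       distrib_right sum_distrib_left mult_ac)

lemma bounded_linear_matrix_vector_mult_left: "bounded_linear (\<lambda>X::real^'n^'m. X *v w)"
  by (rule linear_conv_bounded_linear[THEN iffD1], rule linearI)
     (simp_all add: matrix_vector_mult_add_rdistrib scaleR_matrix_vector_assoc)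

lemma has_vector_derivative_matrix_vector_mult_left:
  fixes A :: "real \<Rightarrow> real^'n^'m"
  assumes "(A has_vector_derivative A') F"
  shows "((\<lambda>s. A s *v w) has_vector_derivative A' *v w) F"
  using bounded_linear.has_vector_derivative[OF bounded_linear_matrix_vector_mult_left assms] .

lemma jacobian_at_eqI:
  fixes f :: "real^'n \<Rightarrow> real^'m"
  assumes "(f has_derivative (\<lambda>h. J *v h)) (at x)"
  shows "jacobian f (at x) = J"
  unfolding jacobian_def frechet_derivative_at[OF assms, symmetric]
  by (rule matrix_of_matrix_vector_mul)

lemma has_derivative_matrix_vector_mult_comp:
  fixes f :: "real^'n \<Rightarrow> real^'m" and M :: "real^'m^'k"
  assumes "f differentiable (at x)"
  shows "((\<lambda>y. M *v f y) has_derivative (\<lambda>h. (M ** jacobian f (at x)) *v h)) (at x)"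
  using bounded_linear.has_derivative[OF matrix_vector_mul_bounded_linear
      jacobian_works[THEN iffD1, OF assms], of M]
  by (simp add: matrix_vector_mul_assoc)

lemma jacobian_matrix_vector_mult_comp:
  fixes f :: "real^'n \<Rightarrow> real^'m" and M :: "real^'m^'k"
  assumes "f differentiable (at x)"
  shows "jacobian (\<lambda>y. M *v f y) (at x) = M ** jacobian f (at x)"
  by (rule jacobian_at_eqI[OF has_derivative_matrix_vector_mult_comp[OF assms]])

lemma has_derivative_comp_matrix_vector_mult:
  fixes g :: "real^'m \<Rightarrow> real^'k" and M :: "real^'n^'m"
  assumes "g differentiable (at (M *v y))"
  shows "((\<lambda>y. g (M *v y)) has_derivative (\<lambda>h. (jacobian g (at (M *v y)) ** M) *v h)) (at y)"
  using diff_chain_at[OF bounded_linear_imp_has_derivative[OF matrix_vector_mul_bounded_linear]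
      jacobian_works[THEN iffD1, OF assms]]
  by (simp add: o_def matrix_vector_mul_assoc)

lemma jacobian_comp_matrix_vector_mult:
  fixes g :: "real^'m \<Rightarrow> real^'k" and M :: "real^'n^'m"
  assumes "g differentiable (at (M *v y))"
  shows "jacobian (\<lambda>y. g (M *v y)) (at y) = jacobian g (at (M *v y)) ** M"
  by (rule jacobian_at_eqI[OF has_derivative_comp_matrix_vector_mult[OF assms]])

lemma diffeo_onto_image_det_jacobian_nonzero:
  assumes "open D" and "diffeo_onto_image v D" and "x \<in> D"
  shows "det (jacobian v (at x)) \<noteq> 0"
proof -
  obtain g where gv: "\<forall>x\<in>D. g (v x) = x" and vd: "v differentiable (at x)"
    and gd: "g differentiable (at (v x))"
    using assms(2,3) unfolding diffeo_onto_image_def by blast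
  let ?J = "jacobian g (at (v x)) ** jacobian v (at x)"
  have "((g \<circ> v) has_derivative (\<lambda>h. ?J *v h)) (at x)"
    using diff_chain_at[OF jacobian_works[THEN iffD1, OF vd] jacobian_works[THEN iffD1, OF gd]]
    by (simp add: o_def matrix_vector_mul_assoc)
  then have "((\<lambda>y. y) has_derivative (\<lambda>h. ?J *v h)) (at x)"
    by (rule has_derivative_transform_within_open[OF _ assms(1,3)]) (use gv in simp)
  then have "?J = jacobian (\<lambda>y. y) (at x)"
    by (rule jacobian_at_eqI[symmetric])
  also have "\<dots> = mat 1"
    by (rule jacobian_at_eqI) (simp add: has_derivative_ident)
  finally have "?J = mat 1" .
  then have "det (jacobian g (at (v x))) * det (jacobian v (at x)) = 1"
    by (metis det_mul det_I)
  then show ?thesis by auto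
qed

lemma diffeo_onto_image_matrix_vector_mult:
  fixes M :: "real^2^2"
  assumes "invertible M" and "diffeo_onto_image v D"
  shows "diffeo_onto_image (\<lambda>\<alpha>. M *v v \<alpha>) D"
proof -
  obtain M' where MM': "M ** M' = mat 1" "M' ** M = mat 1"
    using assms(1) unfolding invertible_def by blast
  have M'M [simp]: "M' *v (M *v y) = y" and MM' [simp]: "M *v (M' *v y) = y" for y
    using MM' by (simp_all add: matrix_vector_mul_assoc)
  obtain g where vinj: "inj_on v D" and vop: "open (v ` D)"
    and vd: "\<forall>x\<in>D. v differentiable (at x)" and vc: "continuous_on D (\<lambda>x. jacobian v (at x))"
    and gv: "\<forall>x\<in>D. g (v x) = x" and gd: "\<forall>y\<in>v ` D. g differentiable (at y)"
    and gc: "continuous_on (v ` D) (\<lambda>y. jacobian g (at y))"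
    using assms(2) unfolding diffeo_onto_image_def by blast
  let ?f = "\<lambda>\<alpha>. M *v v \<alpha>" and ?g = "\<lambda>y. g (M' *v y)"
  have img: "?f ` D = (*v) M ` v ` D" by auto
  have "bij ((*v) M)"
    by (metis M'M MM' bij_betw_byWitness subset_UNIV)
  then have "open (?f ` D)"
    unfolding img using open_bijective_linear_image_eq[OF matrix_vector_mul_linear] vop by blast
  moreover have "inj_on ?f D"
    by (rule inj_onI) (metis M'M inj_onD vinj)
  moreover have "continuous_on D (\<lambda>x. jacobian ?f (at x))"
    by (rule continuous_on_eq[OF bounded_linear.continuous_on[OF bounded_linear_matrix_mult_left vc]])
       (simp add: jacobian_matrix_vector_mult_comp vd)
  moreover have gd': "g differentiable (at (M' *v y))" if "y \<in> ?f ` D" for y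
    using that gd by auto
  moreover have "continuous_on (?f ` D) (\<lambda>y. jacobian ?g (at y))"
  proof (rule continuous_on_eq)
    show "continuous_on (?f ` D) (\<lambda>y. jacobian g (at (M' *v y)) ** M')"
      by (intro bounded_linear.continuous_on[OF bounded_linear_matrix_mult_right]
          continuous_on_compose2[OF gc linear_continuous_on[OF matrix_vector_mul_bounded_linear]])
         auto
  qed (simp add: jacobian_comp_matrix_vector_mult gd')
  moreover have "?f differentiable (at x)" if "x \<in> D" for x
    using has_derivative_matrix_vector_mult_comp vd that by (blast intro: differentiableI)
  moreover have "?g differentiable (at y)" if "y \<in> ?f ` D" for y
    using has_derivative_comp_matrix_vector_mult[OF gd'[OF that]] by (rule differentiableI)
  ultimately show ?thesis
    unfolding diffeo_onto_image_def using gv by (intro conjI exI[of _ ?g]) auto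
qed

lemma SL2_tangent_nilpotent:
  fixes M B :: "real^2^2"
  assumes "M \<in> SL2" and "trace B = 0" and "det B = 0"
  shows "M ** B \<in> tangent_space SL2 M"
proof -
  have "det (mat 1 + s *\<^sub>R B) = 1 + s * trace B + s\<^sup>2 * det B" for s
    by (simp add: det_2 trace_def sum_2 mat_def algebra_simps power2_eq_square)
  moreover have "M + s *\<^sub>R (M ** B) = M ** (mat 1 + s *\<^sub>R B)" for s
    by (simp add: matrix_add_ldistrib matrix_scalar_ac scalar_matrix_assoc[symmetric])
  ultimately have "M + s *\<^sub>R (M ** B) \<in> SL2" for s
    using assms by (simp add: SL2_def det_mul)
  moreover have "((\<lambda>s. M + s *\<^sub>R (M ** B)) has_vector_derivative M ** B) (at 0)"
    by (auto intro!: derivative_eq_intros)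
  ultimately show ?thesis
    unfolding tangent_space_def
    by (intro CollectI exI[of _ "\<lambda>s. M + s *\<^sub>R (M ** B)"] exI[of _ 1]) auto
qed

lemma inner_matrix_mult_left:
  fixes C :: "real^'n^'m" and M :: "real^'k^'m" and B :: "real^'n^'k"
  shows "C \<bullet> (M ** B) = (transpose M ** C) \<bullet> B"
proof -
  have "C \<bullet> (M ** B) = (\<Sum>i\<in>UNIV. \<Sum>j\<in>UNIV. \<Sum>k\<in>UNIV. M$i$k * B$k$j * C$i$j)"
    by (simp add: inner_vec_def matrix_matrix_mult_def sum_distrib_left ac_simps)
  also have "\<dots> = (\<Sum>i\<in>UNIV. \<Sum>k\<in>UNIV. \<Sum>j\<in>UNIV. M$i$k * B$k$j * C$i$j)"
    by (simp only: sum.swap[where A = "UNIV :: 'n set"])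
  also have "\<dots> = (\<Sum>k\<in>UNIV. \<Sum>i\<in>UNIV. \<Sum>j\<in>UNIV. M$i$k * B$k$j * C$i$j)"
    by (rule sum.swap)
  also have "\<dots> = (\<Sum>k\<in>UNIV. \<Sum>j\<in>UNIV. \<Sum>i\<in>UNIV. M$i$k * B$k$j * C$i$j)"
    by (simp only: sum.swap[where A = "UNIV :: 'm set"])
  also have "\<dots> = (transpose M ** C) \<bullet> B"
    by (simp add: inner_vec_def matrix_matrix_mult_def transpose_def sum_distrib_left ac_simps)
  finally show ?thesis .
qed

lemma orthogonal_to_nilpotents_imp_scalar:
  fixes N :: "real^2^2"
  assumes "\<And>B. trace B = 0 \<Longrightarrow> det B = 0 \<Longrightarrow> N \<bullet> B = 0"
  shows "N = mat (N$1$1)"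
proof -
  have "N \<bullet> vector [vector [0, 1], vector [0, 0]] = 0"
    and "N \<bullet> vector [vector [0, 0], vector [1, 0]] = 0"
    and "N \<bullet> vector [vector [1, 1], vector [-1, -1]] = 0"
    by (intro assms; simp add: trace_def det_2 sum_2)+
  then show ?thesis
    by (simp add: inner_vec_def sum_2 vec_eq_iff forall_2 mat_def)
qed

lemma SL2_normal_imp_scalar:
  assumes "M \<in> SL2" and "\<forall>X\<in>tangent_space SL2 M. C \<bullet> X = 0"
  shows "transpose M ** C = mat ((transpose M ** C)$1$1)"
  using assms SL2_tangent_nilpotent
  by (intro orthogonal_to_nilpotents_imp_scalar) (simp add: inner_matrix_mult_left[symmetric])

lemma has_derivative_scaled_inner_self:
  fixes v :: "real^'n \<Rightarrow> real^'n"
  assumes "(v has_derivative (\<lambda>h. J *v h)) (at x)"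
  shows "((\<lambda>\<alpha>. c * (v \<alpha> \<bullet> v \<alpha>) / 2) has_derivative
          (\<lambda>h. (c *\<^sub>R (transpose J *v v x)) \<bullet> h)) (at x)"
proof -
  have "((\<lambda>\<alpha>. c * (v \<alpha> \<bullet> v \<alpha>) / 2) has_derivative
          (\<lambda>h. c * (v x \<bullet> (J *v h) + (J *v h) \<bullet> v x) / 2)) (at x)"
    using assms by (auto intro!: derivative_eq_intros)
  moreover have "v x \<bullet> (J *v h) = (transpose J *v v x) \<bullet> h" for h
    by (simp add: dot_lmul_matrix)
  ultimately show ?thesis
    by (simp add: inner_commute[of "J *v _"])
qed

lemma transpose_matrix_mult_apply_scalar:
  fixes J M C :: "real^'n^'n"
  assumes "transpose M ** C = mat c"
  shows "transpose (M ** J) *v (C *v w) = c *\<^sub>R (transpose J *v w)"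
proof -
  have "transpose (M ** J) *v (C *v w) = transpose J *v ((transpose M ** C) *v w)"
    by (simp add: matrix_transpose_mul matrix_vector_mul_assoc matrix_mul_assoc)
  moreover have "mat c = c *\<^sub>R (mat 1 :: real^'n^'n)"
    by (simp add: vec_eq_iff mat_def)
  ultimately show ?thesis
    by (simp add: assms scaleR_matrix_vector_assoc[symmetric] matrix_vector_mult_scaleR
        del: transpose_matrix_vector)
qed

lemma linear_flow_pressure_balance:
  fixes v :: "real^'n \<Rightarrow> real^'n" and M C :: "real^'n^'n"
  assumes "transpose M ** C = mat c" and "v differentiable (at x)"
  shows "\<exists>g. ((\<lambda>\<alpha>. - c * (v \<alpha> \<bullet> v \<alpha>) / 2) has_derivative (\<lambda>h. g \<bullet> h)) (at x)
             \<and> transpose (jacobian (\<lambda>\<alpha>. M *v v \<alpha>) (at x)) *v (C *v v x) + g = 0"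
proof (intro exI conjI)
  let ?J = "jacobian v (at x)"
  show "((\<lambda>\<alpha>. - c * (v \<alpha> \<bullet> v \<alpha>) / 2) has_derivative
          (\<lambda>h. (- c *\<^sub>R (transpose ?J *v v x)) \<bullet> h)) (at x)"
    using assms(2) jacobian_works by (blast intro: has_derivative_scaled_inner_self)
  show "transpose (jacobian (\<lambda>\<alpha>. M *v v \<alpha>) (at x)) *v (C *v v x)
      + - c *\<^sub>R (transpose ?J *v v x) = 0"
    by (simp add: jacobian_matrix_vector_mult_comp assms transpose_matrix_mult_apply_scalar
        del: transpose_matrix_vector)
qed

theorem theorem4p3:
  fixes D :: "(real^2) set" and v :: "real^2 \<Rightarrow> real^2" and A :: "real \<Rightarrow> real^2^2"
  assumes "open D" and "connected D" and "D \<noteq> {}"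
    and "diffeo_onto_image v D"
    and "geodesic_SL2 A"
  shows "lagrangian_euler_solution D (\<lambda>t \<alpha>. A t *v v \<alpha>)"
proof -
  obtain A1 A2 where A: "\<And>t. t \<ge> 0 \<Longrightarrow> A t \<in> SL2
    \<and> (A has_vector_derivative A1 t) (at t within {0..})
    \<and> (A1 has_vector_derivative A2 t) (at t within {0..})
    \<and> (\<forall>X\<in>tangent_space SL2 (A t). A2 t \<bullet> X = 0)"
    using assms(5) unfolding geodesic_SL2_def by blast
  define c where "c t = (transpose (A t) ** A2 t)$1$1" for t
  have detA: "det (A t) = 1" if "t \<ge> 0" for t
    using A[OF that] by (simp add: SL2_def)
  have vd: "v differentiable (at \<alpha>)" if "\<alpha> \<in> D" for \<alpha>
    using assms(4) that unfolding diffeo_onto_image_def by blast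
  have euler: "((\<lambda>s. A s *v v \<alpha>) has_vector_derivative A1 t *v v \<alpha>) (at t within {0..})
      \<and> ((\<lambda>s. A1 s *v v \<alpha>) has_vector_derivative A2 t *v v \<alpha>) (at t within {0..})
      \<and> (\<exists>g. ((\<lambda>\<alpha>. - c t * (v \<alpha> \<bullet> v \<alpha>) / 2) has_derivative (\<lambda>h. g \<bullet> h)) (at \<alpha>)
          \<and> transpose (jacobian (\<lambda>\<alpha>. A t *v v \<alpha>) (at \<alpha>)) *v (A2 t *v v \<alpha>) + g = 0)"
    if "t \<ge> 0" and "\<alpha> \<in> D" for t \<alpha>
    using A[OF that(1)]
    by (intro conjI has_vector_derivative_matrix_vector_mult_left
        linear_flow_pressure_balance[OF _ vd[OF that(2)]])
       (auto simp: c_def intro: SL2_normal_imp_scalar)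
  show ?thesis
    unfolding lagrangian_euler_solution_def
  proof (intro conjI allI impI ballI, goal_cases diffeo det_const det_nonzero flow)
    show "diffeo_onto_image (\<lambda>\<alpha>. A t *v v \<alpha>) D" if "t \<ge> 0" for t
      by (rule diffeo_onto_image_matrix_vector_mult[OF _ assms(4)])
         (simp add: invertible_det_nz detA that)
    show "det (jacobian (\<lambda>\<alpha>. A t *v v \<alpha>) (at \<alpha>)) = det (jacobian (\<lambda>\<alpha>. A 0 *v v \<alpha>) (at \<alpha>))"
      if "t \<ge> 0" and "\<alpha> \<in> D" for t \<alpha>
      using that by (simp add: jacobian_matrix_vector_mult_comp vd det_mul detA)
    show "det (jacobian (\<lambda>\<alpha>. A 0 *v v \<alpha>) (at \<alpha>)) \<noteq> 0" if "\<alpha> \<in> D" for \<alpha>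
      using that diffeo_onto_image_det_jacobian_nonzero[OF assms(1,4)]
      by (simp add: jacobian_matrix_vector_mult_comp vd det_mul detA)
    case flow
    show ?case
      by (rule exI[of _ "\<lambda>t \<alpha>. A1 t *v v \<alpha>"], rule exI[of _ "\<lambda>t \<alpha>. A2 t *v v \<alpha>"],
          rule exI[of _ "\<lambda>t \<alpha>. - c t * (v \<alpha> \<bullet> v \<alpha>) / 2"]) (use euler in blast)
  qed
qed

end
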